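(* Let $n,m\in\mathbb{N}$, let $\mathcal{Y}\subset\mathbb{R}^m$ be nonempty, convex and compact, and let $f:2^{[n]}\times\mathbb{R}^m\to\mathbb{R}$ be such that $f(\cdot,y)$ is submodular for every $y$ and $f(S,\cdot)$ is concave and continuous for every $S\subset[n]$. Let $f^L$ be the Lovász extension of $f$ with respect to the first variable. Then $$\max_{y\in\mathcal{Y}}\min_{S\subset[n]}f(S,y)\le\min_{S\subset[n]}\max_{y\in\mathcal{Y}}f(S,y).$$ Moreover, if $$\min_{x\in[0,1]^n}\max_{y\in\mathcal{Y}}f^L(x,y)=\min_{x\in\{0,1\}^n}\max_{y\in\mathcal{Y}}f^L(x,y),$$ then $\max_{y\in\mathcal{Y}}\min_{S\subset[n]}f(S,y)=\min_{S\subset[n]}\max_{y\in\mathcal{Y}}f(S,y)=\min_{x\in[0,1]^n}\max_{y\in\mathcal{Y}}f^L(x,y)$, and $f$ admits a saddle point on $2^{[n]}\times\mathcal{Y}$.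
   Context: $[n]=\{1,\dots,n\}$; subsets $S\subset[n]$ are identified with their indicator vectors $\chi_S\in\{0,1\}^n$. A set function $g:2^{[n]}\to\mathbb{R}$ is submodular if $g(S)+g(T)\ge g(S\cap T)+g(S\cup T)$ for all $S,T\subset[n]$. Lovász extension: for $g:2^{[n]}\to\mathbb{R}$ and $x\in[0,1]^n$, choose a permutation $(j_1,\dots,j_n)$ of $[n]$ with $x_{j_1}\ge\dots\ge x_{j_n}$ and set $g^L(x)=(1-x_{j_1})\,g(\emptyset)+\sum_{k=1}^{n-1}(x_{j_k}-x_{j_{k+1}})\,g(\{j_1,\dots,j_k\})+x_{j_n}\,g([n])$. For $f:2^{[n]}\times\mathbb{R}^m\to\mathbb{R}$, the Lovász extension with respect to the first variable is $f^L(x,y):=(f(\cdot,y))^L(x)$. A saddle point of $f$ on $2^{[n]}\times\mathcal{Y}$ is a pair $(S^*,y^* )\in2^{[n]}\times\mathcal{Y}$ with $f(S^*,y)\le f(S^*,y^* )\le f(S,y^* )$ for all $S\subset[n]$, $y\in\mathcal{Y}$. *)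

theory Defs
  imports "HOL-Analysis.Analysis"
begin

text \<open>Ground set [n] = {1..n}; subsets of [n] are sets S \<subseteq> {1..n};
points of [0,1]^n are extensional functions on {1..n} with values in [0,1].\<close>

definition submodular_on :: "nat \<Rightarrow> (nat set \<Rightarrow> real) \<Rightarrow> bool" where
  "submodular_on n g \<longleftrightarrow>
     (\<forall>S T. S \<subseteq> {1..n} \<longrightarrow> T \<subseteq> {1..n} \<longrightarrow> g S + g T \<ge> g (S \<inter> T) + g (S \<union> T))"

definition dec_order :: "nat \<Rightarrow> (nat \<Rightarrow> real) \<Rightarrow> nat list" where
  "dec_order n x = (SOME js. distinct js \<and> set js = {1..n} \<and> sorted_wrt (\<lambda>a b. x a \<ge> x b) js)"

definition lovasz :: "nat \<Rightarrow> (nat set \<Rightarrow> real) \<Rightarrow> (nat \<Rightarrow> real) \<Rightarrow> real" where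
  "lovasz n g x =
    (let js = dec_order n x in
     if n = 0 then g {} else
       (1 - x (js ! 0)) * g {}
       + (\<Sum>k\<in>{1..n-1}. (x (js ! (k-1)) - x (js ! k)) * g (set (take k js)))
       + x (js ! (n-1)) * g {1..n})"

definition lovasz2 :: "nat \<Rightarrow> (nat set \<Rightarrow> 'b \<Rightarrow> real) \<Rightarrow> (nat \<Rightarrow> real) \<Rightarrow> 'b \<Rightarrow> real" where
  "lovasz2 n f x y = lovasz n (\<lambda>S. f S y) x"

definition saddle_point :: "nat \<Rightarrow> (nat set \<Rightarrow> 'b \<Rightarrow> real) \<Rightarrow> 'b set \<Rightarrow> nat set \<Rightarrow> 'b \<Rightarrow> bool" where
  "saddle_point n f Y S0 y0 \<longleftrightarrow> S0 \<subseteq> {1..n} \<and> y0 \<in> Y \<and>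
     (\<forall>S y. S \<subseteq> {1..n} \<longrightarrow> y \<in> Y \<longrightarrow> f S0 y \<le> f S0 y0 \<and> f S0 y0 \<le> f S y0)"

end

theory Submission
  imports Defs
begin

text \<open>The heart of the matter is that the
  minimax value of the Lovasz extension over the whole cube always equals
  \<open>max\<^sub>y min\<^sub>S f(S,y)\<close>. It is at least that value because \<open>f\<^sup>L(x,\<cdot>)\<close> is a convex
  combination of the functions \<open>f(S,\<cdot>)\<close>. It is at most that value because, for every
  \<open>\<epsilon> > 0\<close>, the minimax theorem for the finitely many concave functions \<open>f(S,\<cdot>)\<close> on the
  compact convex set \<open>Y\<close> (proved by induction from its one-dimensional case, which is a
  connectedness argument) yields weights \<open>\<lambda>\<^sub>S\<close> with \<open>\<Sum>\<^sub>S \<lambda>\<^sub>S f(S,y) < max min + \<epsilon>\<close> on \<open>Y\<close>,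
  and by submodularity \<open>f\<^sup>L\<close> at the point \<open>\<Sum>\<^sub>S \<lambda>\<^sub>S \<chi>\<^sub>S\<close> of the cube lies below this
  mixture. At the vertices \<open>f\<^sup>L(\<chi>\<^sub>S,\<cdot>) = f(S,\<cdot>)\<close>, so the hypothesis that the cube and its
  vertices give the same minimax value identifies \<open>max min\<close> with \<open>min max\<close>, and a minimizing
  \<open>S\<close> together with a maximizing \<open>y\<close> is a saddle point.\<close>

section \<open>Mixtures of concave functions\<close>

lemma concave_on_convex_superlevel:
  assumes "concave_on Y F" shows "convex {y\<in>Y. c \<le> F y}"
  unfolding convex_def
proof (intro ballI allI impI)
  fix x y and u v :: real
  assume x: "x \<in> {y\<in>Y. c \<le> F y}" and y: "y \<in> {y\<in>Y. c \<le> F y}"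
    and uv: "0 \<le> u" "0 \<le> v" "u + v = 1"
  have "u *\<^sub>R x + v *\<^sub>R y \<in> Y"
    using concave_on_imp_convex[OF assms] x y uv unfolding convex_def by auto
  moreover have "c \<le> u * F x + v * F y"
    using x y uv convex_bound_le[of "- F x" "- c" "- F y" u v] by (simp add: algebra_simps)
  moreover have "u * F x + v * F y \<le> F (u *\<^sub>R x + v *\<^sub>R y)"
    using assms x y uv unfolding concave_on_iff by auto
  ultimately show "u *\<^sub>R x + v *\<^sub>R y \<in> {y\<in>Y. c \<le> F y}" by auto
qed

lemma concave_on_sum_cmul:
  assumes "finite I" "convex Y" "\<And>i. i \<in> I \<Longrightarrow> concave_on Y (g i)" "\<And>i. i \<in> I \<Longrightarrow> 0 \<le> \<mu> i"
  shows "concave_on Y (\<lambda>y. \<Sum>i\<in>I. \<mu> i * g i y)"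
  using assms
proof (induction I rule: finite_induct)
  case empty then show ?case by (simp add: concave_on_const)
next
  case (insert k I)
  then show ?case by (simp, intro concave_on_add concave_on_cmul) auto
qed

lemma continuous_on_Min:
  fixes F :: "'c \<Rightarrow> 'a::topological_space \<Rightarrow> real"
  assumes "finite P" "P \<noteq> {}" "\<And>S. S \<in> P \<Longrightarrow> continuous_on Y (F S)"
  shows "continuous_on Y (\<lambda>y. MIN S\<in>P. F S y)"
  using assms
proof (induction P rule: finite_ne_induct)
  case (insert S P)
  then show ?case by (simp add: continuous_on_min)
qed simp

lemma compact_superlevel:
  fixes \<phi> :: "'a::t2_space \<Rightarrow> real"
  assumes "compact K" "continuous_on K \<phi>"
  shows "compact {x\<in>K. c \<le> \<phi> x}"
proof -
  have "closed {x\<in>K. c \<le> \<phi> x}"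
    using assms by (intro continuous_on_closed_Collect_le continuous_on_const compact_imp_closed)
  then have "compact (K \<inter> {x\<in>K. c \<le> \<phi> x})"
    using assms(1) compact_Int_closed by blast
  then show ?thesis by (simp add: Int_absorb1)
qed

lemma convex_combination_le_max:
  fixes a b t :: real
  assumes "0 \<le> t" "t \<le> 1"
  shows "t * a + (1 - t) * b \<le> max a b"
  using assms by (intro convex_bound_le) auto

lemma superlevel_concave_mixture_one_sided:
  fixes Y :: "'b::real_normed_vector set"
  assumes "compact Y"
    and concave: "concave_on Y g" "concave_on Y h"
    and cont: "continuous_on Y g" "continuous_on Y h"
    and below: "\<And>y. y \<in> Y \<Longrightarrow> g y < c \<or> h y < c"
    and t: "0 \<le> t" "t \<le> 1"
  defines "L \<equiv> {y\<in>Y. c \<le> t * g y + (1 - t) * h y}"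
  shows "L \<subseteq> {y. c \<le> g y} \<or> L \<subseteq> {y. c \<le> h y}"
proof -
  have "concave_on Y (\<lambda>y. t * g y + (1 - t) * h y)"
    using concave t by (intro concave_on_add concave_on_cmul) auto
  then have "connected L"
    unfolding L_def by (intro convex_connected concave_on_convex_superlevel)
  moreover have "closed {y\<in>Y. c \<le> g y}" "closed {y\<in>Y. c \<le> h y}"
    using assms(1) cont by (auto intro: compact_imp_closed compact_superlevel)
  moreover have "L \<subseteq> {y\<in>Y. c \<le> g y} \<union> {y\<in>Y. c \<le> h y}"
  proof
    fix y assume "y \<in> L"
    moreover have "t * g y + (1 - t) * h y \<le> max (g y) (h y)"
      using t by (rule convex_combination_le_max)
    ultimately have "c \<le> max (g y) (h y)" unfolding L_def by auto
    with \<open>y \<in> L\<close> show "y \<in> {y\<in>Y. c \<le> g y} \<union> {y\<in>Y. c \<le> h y}"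
      unfolding L_def by (auto simp: le_max_iff_disj)
  qed
  moreover have "{y\<in>Y. c \<le> g y} \<inter> {y\<in>Y. c \<le> h y} \<inter> L = {}"
    using below by force
  ultimately show ?thesis
    unfolding connected_closed by blast
qed

text \<open>The one-dimensional case of the minimax theorem: if no mixture of \<open>g\<close> and \<open>h\<close> stays
  below \<open>c\<close>, then \<open>[0,1]\<close> is covered by the closed sets \<open>T g\<close>, \<open>T h\<close> of those \<open>t\<close> whose
  mixture reaches \<open>c\<close> where \<open>g\<close> does, resp. where \<open>h\<close> does; they are disjoint because the
  superlevel set of each mixture is connected, contradicting the connectedness of \<open>[0,1]\<close>.\<close>

lemma concave_pair_mixture_less:
  fixes Y :: "'b::real_normed_vector set"
  assumes Y: "compact Y" "convex Y"
    and concave: "concave_on Y g" "concave_on Y h"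
    and cont: "continuous_on Y g" "continuous_on Y h"
    and below: "\<And>y. y \<in> Y \<Longrightarrow> g y < c \<or> h y < c"
  shows "\<exists>t\<in>{0..1}. \<forall>y\<in>Y. t * g y + (1 - t) * h y < c"
proof (rule ccontr)
  define F where "F t y = t * g y + (1 - t) * h y" for t y
  assume "\<not> ?thesis"
  then have witness: "\<exists>y\<in>Y. c \<le> F t y" if "t \<in> {0..1}" for t
    using that by (auto simp: F_def not_less)
  define T where "T k = fst ` {p \<in> {0..1} \<times> Y. c \<le> min (F (fst p) (snd p)) (k (snd p))}" for k
  have in_T: "t \<in> T k" if "t \<in> {0..1}" "y \<in> Y" "c \<le> F t y" "c \<le> k y" for t y k
    unfolding T_def using that by (intro image_eqI[where x = "(t, y)"]) auto
  have closed_T: "closed (T k)" if "continuous_on Y k" for k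
  proof -
    have "continuous_on ({0..1::real} \<times> Y) (\<lambda>p. u (snd p))" if "continuous_on Y u" for u
      using that by (rule continuous_on_compose2) (auto intro: continuous_intros)
    then have "continuous_on ({0..1} \<times> Y) (\<lambda>p. min (F (fst p) (snd p)) (k (snd p)))"
      unfolding F_def using cont that by (intro continuous_intros) auto
    then have "compact {p \<in> {0..1} \<times> Y. c \<le> min (F (fst p) (snd p)) (k (snd p))}"
      using Y by (intro compact_superlevel compact_Times) auto
    then show ?thesis
      unfolding T_def by (intro compact_imp_closed compact_continuous_image continuous_intros)
  qed
  have cover: "{0..1} \<subseteq> T g \<union> T h"
  proof
    fix t :: real assume t: "t \<in> {0..1}"
    then obtain y where "y \<in> Y" "c \<le> F t y" using witness by blast
    moreover have "F t y \<le> max (g y) (h y)"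
      unfolding F_def using t by (intro convex_combination_le_max) auto
    ultimately show "t \<in> T g \<union> T h" using t in_T by (auto simp: le_max_iff_disj)
  qed
  have disjoint: "T g \<inter> T h \<inter> {0..1} = {}"
  proof (rule ccontr)
    assume "T g \<inter> T h \<inter> {0..1} \<noteq> {}"
    then obtain t y1 y2 where t: "t \<in> {0..1}" and y1: "y1 \<in> Y" "c \<le> F t y1" "c \<le> g y1"
      and y2: "y2 \<in> Y" "c \<le> F t y2" "c \<le> h y2"
      unfolding T_def by fastforce
    then show False
      using superlevel_concave_mixture_one_sided[OF Y(1) concave cont below, of t] below
      unfolding F_def by fastforce
  qed
  have "T g \<inter> {0..1} \<noteq> {}" "T h \<inter> {0..1} \<noteq> {}"
    using witness[of 1] witness[of 0] in_T[of 1 _ g] in_T[of 0 _ h] by (fastforce simp: F_def)+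
  then have "\<not> connected {0..1::real}"
    unfolding connected_closed using closed_T[OF cont(1)] closed_T[OF cont(2)] cover disjoint
    by blast
  then show False by simp
qed

text \<open>Induction on the family: the induction hypothesis, applied on the compact convex set
  where the new function reaches \<open>c\<close>, yields a mixture of the others that stays below \<open>c\<close>
  there; the pair lemma then mixes it with the new function.\<close>

lemma concave_family_mixture_less:
  fixes Y :: "'b::real_normed_vector set" and g :: "'a \<Rightarrow> 'b \<Rightarrow> real"
  assumes "finite I" "I \<noteq> {}" "compact Y" "convex Y"
    and "\<And>i. i \<in> I \<Longrightarrow> concave_on Y (g i)" "\<And>i. i \<in> I \<Longrightarrow> continuous_on Y (g i)"
    and "\<And>y. y \<in> Y \<Longrightarrow> \<exists>i\<in>I. g i y < c"
  shows "\<exists>l. (\<forall>i\<in>I. 0 \<le> l i) \<and> sum l I = 1 \<and> (\<forall>y\<in>Y. (\<Sum>i\<in>I. l i * g i y) < c)"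
  using assms
proof (induction I arbitrary: Y rule: finite_ne_induct)
  case (singleton k)
  then show ?case by (intro exI[of _ "\<lambda>_. 1"]) auto
next
  case (insert k I)
  define Y' where "Y' = {y\<in>Y. c \<le> g k y}"
  have "compact Y'"
    unfolding Y'_def using insert.prems by (intro compact_superlevel) auto
  moreover have "convex Y'"
    unfolding Y'_def using insert.prems by (intro concave_on_convex_superlevel) auto
  moreover have "Y' \<subseteq> Y" unfolding Y'_def by auto
  moreover have "concave_on Y' (g i)" if "i \<in> I" for i
    using insert.prems(3)[of i] that \<open>Y' \<subseteq> Y\<close> \<open>convex Y'\<close>
    unfolding concave_on_def by (auto intro: convex_on_subset)
  moreover have "continuous_on Y' (g i)" if "i \<in> I" for i
    using insert.prems(4)[of i] that \<open>Y' \<subseteq> Y\<close> by (auto intro: continuous_on_subset)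
  moreover have "\<exists>i\<in>I. g i y < c" if "y \<in> Y'" for y
    using insert.prems(5)[of y] that unfolding Y'_def by auto
  ultimately obtain \<mu> where \<mu>: "\<forall>i\<in>I. 0 \<le> \<mu> i" "sum \<mu> I = 1" "\<forall>y\<in>Y'. (\<Sum>i\<in>I. \<mu> i * g i y) < c"
    using insert.IH[of Y'] by blast
  define G where "G y = (\<Sum>i\<in>I. \<mu> i * g i y)" for y
  have "concave_on Y G"
    unfolding G_def using insert.prems insert.hyps \<mu> by (intro concave_on_sum_cmul) auto
  moreover have "continuous_on Y G"
    unfolding G_def using insert.prems by (intro continuous_intros) auto
  moreover have "G y < c \<or> g k y < c" if "y \<in> Y" for y
    using \<mu>(3) that unfolding G_def Y'_def by force
  ultimately obtain t where t: "t \<in> {0..1}" "\<forall>y\<in>Y. t * G y + (1 - t) * g k y < c"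
    using concave_pair_mixture_less[of Y G "g k" c] insert.prems by auto
  define l where "l j = (if j = k then 1 - t else t * \<mu> j)" for j
  have sum_l: "(\<Sum>i\<in>insert k I. l i * a i) = t * (\<Sum>i\<in>I. \<mu> i * a i) + (1 - t) * a k" for a
  proof -
    have "(\<Sum>i\<in>I. l i * a i) = t * (\<Sum>i\<in>I. \<mu> i * a i)"
      unfolding sum_distrib_left using insert.hyps by (intro sum.cong) (auto simp: l_def)
    then show ?thesis using insert.hyps by (simp add: l_def)
  qed
  show ?case
  proof (intro exI[of _ l] conjI ballI)
    show "0 \<le> l i" if "i \<in> insert k I" for i using t \<mu> that by (auto simp: l_def)
    show "sum l (insert k I) = 1" using sum_l[of "\<lambda>_. 1"] \<mu>(2) by simp
    show "(\<Sum>i\<in>insert k I. l i * g i y) < c" if "y \<in> Y" for y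
      using sum_l[of "\<lambda>i. g i y"] t(2) that unfolding G_def by simp
  qed
qed

section \<open>The Lovasz extension\<close>

lemma dec_order:
  "distinct (dec_order n x)" "set (dec_order n x) = {1..n}"
  "sorted_wrt (\<lambda>a b. x a \<ge> x b) (dec_order n x)"
proof -
  define js where "js = sort_key (\<lambda>a. - x a) (sorted_list_of_set {1..n})"
  have "sorted (map (\<lambda>a. - x a) js)" unfolding js_def by (rule sorted_sort_key)
  then have "distinct js \<and> set js = {1..n} \<and> sorted_wrt (\<lambda>a b. x a \<ge> x b) js"
    unfolding js_def by (simp add: sorted_wrt_map)
  then have "distinct (dec_order n x) \<and> set (dec_order n x) = {1..n}
      \<and> sorted_wrt (\<lambda>a b. x a \<ge> x b) (dec_order n x)"
    unfolding dec_order_def by (rule someI)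
  then show "distinct (dec_order n x)" "set (dec_order n x) = {1..n}"
    "sorted_wrt (\<lambda>a b. x a \<ge> x b) (dec_order n x)"
    by blast+
qed

lemma length_dec_order [simp]: "length (dec_order n x) = n"
  using dec_order(1,2)[of n x] distinct_card by fastforce

lemma dec_order_nth_mem: "k < n \<Longrightarrow> dec_order n x ! k \<in> {1..n}"
  using dec_order(2)[of n x] nth_mem[of k "dec_order n x"] by simp

lemma set_take_dec_order: "set (take k (dec_order n x)) \<subseteq> {1..n}"
  using dec_order(2)[of n x] set_take_subset[of k "dec_order n x"] by simp

definition marginal_gain :: "(nat set \<Rightarrow> real) \<Rightarrow> nat list \<Rightarrow> nat \<Rightarrow> real" where
  "marginal_gain g js k = g (set (take (Suc k) js)) - g (set (take k js))"

lemma summation_by_parts_chain: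
  fixes a G :: "nat \<Rightarrow> real"
  shows "(1 - a 0) * G 0 + (\<Sum>k\<in>{1..m}. (a (k - 1) - a k) * G k) + a m * G (Suc m)
       = G 0 + (\<Sum>k\<le>m. a k * (G (Suc k) - G k))"
proof (induction m)
  case (Suc m)
  have "(\<Sum>k\<in>{1..Suc m}. (a (k - 1) - a k) * G k)
      = (\<Sum>k\<in>{1..m}. (a (k - 1) - a k) * G k) + (a m - a (Suc m)) * G (Suc m)"
    by simp
  then show ?case using Suc.IH by (simp add: algebra_simps)
qed (simp add: algebra_simps)

lemma lovasz_Suc:
  fixes m :: nat and x :: "nat \<Rightarrow> real"
  defines "js \<equiv> dec_order (Suc m) x"
  shows "lovasz (Suc m) g x = (1 - x (js ! 0)) * g (set (take 0 js))
    + (\<Sum>k\<in>{1..m}. (x (js ! (k - 1)) - x (js ! k)) * g (set (take k js)))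
    + x (js ! m) * g (set (take (Suc m) js))"
  using dec_order(2)[of "Suc m" x] unfolding lovasz_def Let_def js_def by simp

lemma lovasz_greedy:
  "lovasz n g x = g {} + (\<Sum>k<n. x (dec_order n x ! k) * marginal_gain g (dec_order n x) k)"
proof (cases n)
  case 0 then show ?thesis by (simp add: lovasz_def)
next
  case (Suc m)
  define js where "js = dec_order n x"
  show ?thesis
    using summation_by_parts_chain[of "\<lambda>k. x (js ! k)" "\<lambda>k. g (set (take k js))" m]
    unfolding Suc lovasz_Suc js_def marginal_gain_def lessThan_Suc_atMost by simp
qed

lemma lovasz_ge_lower_bound:
  assumes x: "\<forall>i\<in>{1..n}. 0 \<le> x i \<and> x i \<le> 1" and lb: "\<And>S. S \<subseteq> {1..n} \<Longrightarrow> b \<le> g S"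
  shows "b \<le> lovasz n g x"
proof (cases n)
  case 0 then show ?thesis using lb by (simp add: lovasz_def)
next
  case (Suc m)
  define js where "js = dec_order n x"
  define a where "a k = x (js ! k)" for k
  define G where "G k = g (set (take k js))" for k
  have G: "b \<le> G k" for k unfolding G_def js_def by (intro lb set_take_dec_order)
  have a01: "0 \<le> a k \<and> a k \<le> 1" if "k \<le> m" for k
    unfolding a_def js_def using x dec_order_nth_mem[of k n x] that Suc by auto
  have a_mono: "a k \<le> a (k - 1)" if "k \<in> {1..m}" for k
    unfolding a_def js_def using sorted_wrt_nth_less[OF dec_order(3), of "k - 1" k n x] that Suc by auto
  have "b = (1 - a 0) * b + (\<Sum>k\<in>{1..m}. (a (k - 1) - a k) * b) + a m * b"
    using summation_by_parts_chain[of a "\<lambda>_. b" m] by simp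
  also have "\<dots> \<le> (1 - a 0) * G 0 + (\<Sum>k\<in>{1..m}. (a (k - 1) - a k) * G k) + a m * G (Suc m)"
    using a01 a_mono G by (intro add_mono mult_left_mono sum_mono) auto
  also have "\<dots> = lovasz n g x"
    unfolding Suc lovasz_Suc a_def G_def js_def by simp
  finally show ?thesis .
qed

lemma continuous_on_lovasz2:
  assumes "\<And>S. S \<subseteq> {1..n} \<Longrightarrow> continuous_on Y (f S)"
  shows "continuous_on Y (lovasz2 n f x)"
  unfolding lovasz2_def[abs_def] lovasz_greedy marginal_gain_def
  by (intro continuous_intros assms set_take_dec_order empty_subsetI)

lemma sorted_wrt_zero_one_prefix:
  fixes x :: "'a \<Rightarrow> real"
  assumes "sorted_wrt (\<lambda>a b. x a \<ge> x b) js" "\<forall>a\<in>set js. x a \<in> {0, 1}"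
  shows "\<exists>p\<le>length js. \<forall>k<length js. x (js ! k) = (if k < p then 1 else 0)"
  using assms
proof (induction js)
  case Nil then show ?case by simp
next
  case (Cons a js)
  then obtain p where p: "p \<le> length js" "\<forall>k<length js. x (js ! k) = (if k < p then 1 else 0)"
    by auto
  show ?case
  proof (cases "x a = 1")
    case True
    with p show ?thesis by (intro exI[of _ "Suc p"]) (auto simp: nth_Cons split: nat.split)
  next
    case False
    then have zero: "x b = 0" if "b \<in> set (a # js)" for b
      using Cons.prems that by fastforce
    show ?thesis by (intro exI[of _ 0]) (simp add: zero del: list.set)
  qed
qed

lemma lovasz_vertex:
  assumes "\<forall>i\<in>{1..n}. x i \<in> {0, 1}"
  shows "lovasz n g x = g {i\<in>{1..n}. x i = 1}"
proof -
  define js where "js = dec_order n x"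
  obtain p where p: "p \<le> n" "\<forall>k<n. x (js ! k) = (if k < p then 1 else 0)"
    using sorted_wrt_zero_one_prefix[OF dec_order(3), of n x] assms dec_order(2)[of n x]
    unfolding js_def by auto
  have "lovasz n g x = g {} + (\<Sum>k<n. x (js ! k) * marginal_gain g js k)"
    unfolding js_def by (rule lovasz_greedy)
  also have "(\<Sum>k<n. x (js ! k) * marginal_gain g js k) = (\<Sum>k<p. marginal_gain g js k)"
    using p by (intro sum.mono_neutral_cong_right) auto
  also have "g {} + \<dots> = g (set (take p js))"
    using sum_lessThan_telescope[of "\<lambda>k. g (set (take k js))" p]
    unfolding marginal_gain_def by simp
  also have "set (take p js) = {i\<in>{1..n}. x i = 1}"
  proof (intro set_eqI iffI)
    fix a assume "a \<in> set (take p js)"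
    then obtain k where "k < p" "a = js ! k"
      using p(1) unfolding js_def by (auto simp: in_set_conv_nth)
    then show "a \<in> {i\<in>{1..n}. x i = 1}"
      using p dec_order_nth_mem[of k n x] unfolding js_def by auto
  next
    fix a assume a: "a \<in> {i\<in>{1..n}. x i = 1}"
    then obtain k where "k < n" "a = js ! k"
      using dec_order(2)[of n x] in_set_conv_nth[of a "dec_order n x"] unfolding js_def by auto
    then show "a \<in> set (take p js)"
      using a p unfolding js_def by (auto simp: in_set_conv_nth split: if_splits)
  qed
  finally show ?thesis .
qed

lemma submodular_greedy_le:
  assumes sub: "submodular_on n g" and js: "set js \<subseteq> {1..n}" and T: "T \<subseteq> {1..n}"
    and m: "m \<le> length js"
  shows "g {} + (\<Sum>k<m. if js ! k \<in> T then marginal_gain g js k else 0) \<le> g (T \<inter> set (take m js))"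
  using m
proof (induction m)
  case (Suc m)
  define S where "S = set (take m js)"
  have S_Suc: "set (take (Suc m) js) = insert (js ! m) S"
    unfolding S_def using Suc.prems by (simp add: take_Suc_conv_app_nth)
  have S: "S \<subseteq> {1..n}" unfolding S_def using js set_take_subset[of m js] by simp
  have IH: "g {} + (\<Sum>k<m. if js ! k \<in> T then marginal_gain g js k else 0) \<le> g (T \<inter> S)"
    using Suc unfolding S_def by simp
  show ?case
  proof (cases "js ! m \<in> T")
    case True
    define T' where "T' = T \<inter> insert (js ! m) S"
    have "g (S \<inter> T') + g (S \<union> T') \<le> g S + g T'"
      using sub S T unfolding submodular_on_def T'_def by blast
    moreover have "S \<inter> T' = T \<inter> S" "S \<union> T' = insert (js ! m) S"
      unfolding T'_def using True by auto
    ultimately have "marginal_gain g js m \<le> g T' - g (T \<inter> S)"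
      unfolding marginal_gain_def S_Suc S_def by simp
    then show ?thesis using IH True unfolding T'_def S_Suc by simp
  next
    case False
    then show ?thesis using IH unfolding S_Suc by (simp add: Int_insert_right)
  qed
qed simp

lemma lovasz_le_convex_combination:
  assumes sub: "submodular_on n g"
    and l: "\<forall>T\<in>Pow {1..n}. 0 \<le> l T" "sum l (Pow {1..n}) = 1"
    and x: "\<forall>i\<in>{1..n}. x i = (\<Sum>T\<in>Pow {1..n}. l T * (if i \<in> T then 1 else 0))"
  shows "lovasz n g x \<le> (\<Sum>T\<in>Pow {1..n}. l T * g T)"
proof -
  define js where "js = dec_order n x"
  let ?P = "Pow {1..n}"
  let ?greedy = "\<lambda>T. g {} + (\<Sum>k<n. if js ! k \<in> T then marginal_gain g js k else 0)"
  have "lovasz n g x = g {} + (\<Sum>k<n. x (js ! k) * marginal_gain g js k)"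
    unfolding js_def by (rule lovasz_greedy)
  also have "\<dots> = g {} + (\<Sum>k<n. \<Sum>T\<in>?P. l T * (if js ! k \<in> T then marginal_gain g js k else 0))"
    using x dec_order_nth_mem[of _ n x] unfolding js_def
    by (auto simp: sum_distrib_right intro!: sum.cong)
  also have "\<dots> = (\<Sum>T\<in>?P. l T * ?greedy T)"
  proof -
    have "(\<Sum>T\<in>?P. l T * g {}) = g {}"
      using l(2) by (simp flip: sum_distrib_right)
    moreover have "(\<Sum>k<n. \<Sum>T\<in>?P. l T * (if js ! k \<in> T then marginal_gain g js k else 0))
        = (\<Sum>T\<in>?P. l T * (\<Sum>k<n. if js ! k \<in> T then marginal_gain g js k else 0))"
      by (simp add: sum.swap[of _ "{..<n}"] sum_distrib_left)
    ultimately show ?thesis by (simp add: distrib_left sum.distrib)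
  qed
  also have "\<dots> \<le> (\<Sum>T\<in>?P. l T * g T)"
  proof (rule sum_mono)
    fix T assume T: "T \<in> ?P"
    have "?greedy T \<le> g T"
      using submodular_greedy_le[OF sub _ _ order_refl, of js T] dec_order(2)[of n x] T
      unfolding js_def by (auto simp: Int_absorb2)
    then show "l T * ?greedy T \<le> l T * g T"
      using l T by (intro mult_left_mono) auto
  qed
  finally show ?thesis .
qed

lemma INF_lovasz2_vertices:
  "(INF x\<in>{1..n} \<rightarrow>\<^sub>E {0,1}. SUP y\<in>Y. lovasz2 n f x y) = (MIN S\<in>Pow {1..n}. SUP y\<in>Y. f S y)"
proof -
  let ?V = "{1..n} \<rightarrow>\<^sub>E {0, 1::real}"
  define ones where "ones x = {i\<in>{1..n}. x i = 1}" for x :: "nat \<Rightarrow> real"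
  have ones_V: "ones ` ?V = Pow {1..n}"
  proof (intro subset_antisym subsetI)
    fix S assume "S \<in> Pow {1..n}"
    then show "S \<in> ones ` ?V"
      unfolding ones_def by (intro image_eqI[where x = "\<lambda>i\<in>{1..n}. if i \<in> S then 1 else 0"]) auto
  qed (auto simp: ones_def)
  have "(INF x\<in>?V. SUP y\<in>Y. lovasz2 n f x y) = (INF x\<in>?V. SUP y\<in>Y. f (ones x) y)"
    unfolding lovasz2_def ones_def by (intro INF_cong SUP_cong refl lovasz_vertex) auto
  also have "\<dots> = (INF S\<in>Pow {1..n}. SUP y\<in>Y. f S y)"
    unfolding ones_V[symmetric] image_image ..
  also have "\<dots> = (MIN S\<in>Pow {1..n}. SUP y\<in>Y. f S y)"
    by (intro cInf_eq_Min) auto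
  finally show ?thesis .
qed

section \<open>Submodular-concave games\<close>

locale submodular_concave_game =
  fixes n :: nat and Y :: "'b::real_normed_vector set" and f :: "nat set \<Rightarrow> 'b \<Rightarrow> real"
  assumes Y_nonempty: "Y \<noteq> {}" and Y_convex: "convex Y" and Y_compact: "compact Y"
    and f_submodular: "\<And>y. y \<in> Y \<Longrightarrow> submodular_on n (\<lambda>S. f S y)"
    and f_concave: "\<And>S. S \<subseteq> {1..n} \<Longrightarrow> concave_on Y (f S)"
    and f_continuous: "\<And>S. S \<subseteq> {1..n} \<Longrightarrow> continuous_on Y (f S)"
begin

abbreviation maxmin :: real where
  "maxmin \<equiv> SUP y\<in>Y. MIN S\<in>Pow {1..n}. f S y"

abbreviation minmax :: real where
  "minmax \<equiv> MIN S\<in>Pow {1..n}. SUP y\<in>Y. f S y"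

lemma bdd_above_f: "S \<subseteq> {1..n} \<Longrightarrow> bdd_above (f S ` Y)"
  using f_continuous Y_compact
  by (intro bounded_imp_bdd_above compact_imp_bounded compact_continuous_image)

lemma bdd_above_lovasz2: "bdd_above (lovasz2 n f x ` Y)"
  using f_continuous Y_compact
  by (intro bounded_imp_bdd_above compact_imp_bounded compact_continuous_image continuous_on_lovasz2)

lemma continuous_on_Min_f: "continuous_on Y (\<lambda>y. MIN S\<in>Pow {1..n}. f S y)"
  using f_continuous by (intro continuous_on_Min) auto

lemma Min_le_maxmin: "y \<in> Y \<Longrightarrow> (MIN S\<in>Pow {1..n}. f S y) \<le> maxmin"
  using continuous_on_Min_f Y_compact
  by (intro cSUP_upper bounded_imp_bdd_above compact_imp_bounded compact_continuous_image)

lemma maxmin_attained: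
  obtains y0 where "y0 \<in> Y" "maxmin = (MIN S\<in>Pow {1..n}. f S y0)"
proof -
  obtain y0 where "y0 \<in> Y" "\<And>y. y \<in> Y \<Longrightarrow> (MIN S\<in>Pow {1..n}. f S y) \<le> (MIN S\<in>Pow {1..n}. f S y0)"
    using continuous_attains_sup[OF Y_compact Y_nonempty continuous_on_Min_f] by blast
  then have "maxmin = (MIN S\<in>Pow {1..n}. f S y0)"
    by (intro cSup_eq_maximum) auto
  with \<open>y0 \<in> Y\<close> show ?thesis using that by blast
qed

lemma maxmin_le_minmax: "maxmin \<le> minmax"
proof -
  obtain y0 where y0: "y0 \<in> Y" "maxmin = (MIN S\<in>Pow {1..n}. f S y0)"
    using maxmin_attained .
  show ?thesis
  proof (rule Min.boundedI)
    fix a assume "a \<in> (\<lambda>S. SUP y\<in>Y. f S y) ` Pow {1..n}"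
    then obtain S where S: "S \<subseteq> {1..n}" "a = (SUP y\<in>Y. f S y)" by auto
    have "maxmin \<le> f S y0" using y0 S by (simp add: Min_le)
    also have "\<dots> \<le> a" using S y0 bdd_above_f by (auto intro: cSUP_upper)
    finally show "maxmin \<le> a" .
  qed auto
qed

lemma maxmin_le_SUP_lovasz2:
  assumes "x \<in> {1..n} \<rightarrow>\<^sub>E {0..1}"
  shows "maxmin \<le> (SUP y\<in>Y. lovasz2 n f x y)"
proof -
  obtain y0 where y0: "y0 \<in> Y" "maxmin = (MIN S\<in>Pow {1..n}. f S y0)"
    using maxmin_attained .
  have "maxmin \<le> lovasz2 n f x y0"
    unfolding lovasz2_def using assms y0 by (intro lovasz_ge_lower_bound) (auto simp: Min_le)
  also have "\<dots> \<le> (SUP y\<in>Y. lovasz2 n f x y)"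
    using bdd_above_lovasz2 y0(1) by (rule cSUP_upper2) simp
  finally show ?thesis .
qed

lemma SUP_lovasz2_le_maxmin_plus:
  assumes "0 < e"
  obtains x where "x \<in> {1..n} \<rightarrow>\<^sub>E {0..1}" "(SUP y\<in>Y. lovasz2 n f x y) \<le> maxmin + e"
proof -
  let ?P = "Pow {1..n}"
  have "\<exists>S\<in>?P. f S y < maxmin + e" if "y \<in> Y" for y
  proof -
    have "(MIN S\<in>?P. f S y) \<in> (\<lambda>S. f S y) ` ?P" by (intro Min_in) auto
    then obtain S where "S \<in> ?P" "f S y = (MIN S\<in>?P. f S y)" by (metis imageE)
    then show ?thesis using Min_le_maxmin[OF that] assms by (intro bexI[of _ S]) auto
  qed
  then have "\<exists>l. (\<forall>S\<in>?P. 0 \<le> l S) \<and> sum l ?P = 1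
      \<and> (\<forall>y\<in>Y. (\<Sum>S\<in>?P. l S * f S y) < maxmin + e)"
    by (intro concave_family_mixture_less Y_compact Y_convex f_concave f_continuous) auto
  then obtain l where l: "\<forall>S\<in>?P. 0 \<le> l S" "sum l ?P = 1"
    "\<forall>y\<in>Y. (\<Sum>S\<in>?P. l S * f S y) < maxmin + e"
    by blast
  define x where "x = (\<lambda>i\<in>{1..n}. \<Sum>T\<in>?P. l T * (if i \<in> T then 1 else 0))"
  have "x \<in> {1..n} \<rightarrow>\<^sub>E {0..1}"
  proof -
    have "(\<Sum>T\<in>?P. l T * (if i \<in> T then 1 else 0)) \<le> (\<Sum>T\<in>?P. l T)" for i
      using l by (intro sum_mono) auto
    moreover have "0 \<le> (\<Sum>T\<in>?P. l T * (if i \<in> T then 1 else 0))" for i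
      using l by (intro sum_nonneg) auto
    ultimately show ?thesis unfolding x_def using l(2) by auto
  qed
  moreover have "(SUP y\<in>Y. lovasz2 n f x y) \<le> maxmin + e"
  proof (rule cSUP_least[OF Y_nonempty])
    fix y assume "y \<in> Y"
    have "lovasz2 n f x y \<le> (\<Sum>S\<in>?P. l S * f S y)"
      unfolding lovasz2_def using f_submodular[OF \<open>y \<in> Y\<close>] l(1,2)
      by (intro lovasz_le_convex_combination) (auto simp: x_def)
    then show "lovasz2 n f x y \<le> maxmin + e" using l(3) \<open>y \<in> Y\<close> by fastforce
  qed
  ultimately show ?thesis using that by blast
qed

lemma lovasz_minmax_eq_maxmin:
  "(INF x\<in>{1..n} \<rightarrow>\<^sub>E {0..1}. SUP y\<in>Y. lovasz2 n f x y) = maxmin"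
proof (rule antisym)
  let ?C = "{1..n} \<rightarrow>\<^sub>E {0..1::real}"
  have bdd: "bdd_below ((\<lambda>x. SUP y\<in>Y. lovasz2 n f x y) ` ?C)"
    using maxmin_le_SUP_lovasz2 by (intro bdd_belowI2) auto
  show "(INF x\<in>?C. SUP y\<in>Y. lovasz2 n f x y) \<le> maxmin"
  proof (rule field_le_epsilon)
    fix e :: real assume "0 < e"
    then obtain x where "x \<in> ?C" "(SUP y\<in>Y. lovasz2 n f x y) \<le> maxmin + e"
      by (rule SUP_lovasz2_le_maxmin_plus)
    then show "(INF x\<in>?C. SUP y\<in>Y. lovasz2 n f x y) \<le> maxmin + e"
      using bdd by (meson cINF_lower order_trans)
  qed
  have "?C \<noteq> {}" by (simp add: PiE_eq_empty_iff)
  then show "maxmin \<le> (INF x\<in>?C. SUP y\<in>Y. lovasz2 n f x y)"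
    using maxmin_le_SUP_lovasz2 by (intro cINF_greatest) auto
qed

lemma saddle_point_if_maxmin_eq_minmax:
  assumes "maxmin = minmax"
  shows "\<exists>S0 y0. saddle_point n f Y S0 y0"
proof -
  obtain y0 where y0: "y0 \<in> Y" "maxmin = (MIN S\<in>Pow {1..n}. f S y0)"
    using maxmin_attained .
  have "minmax \<in> (\<lambda>S. SUP y\<in>Y. f S y) ` Pow {1..n}" by (intro Min_in) auto
  then obtain S0 where S0: "S0 \<subseteq> {1..n}" "minmax = (SUP y\<in>Y. f S0 y)" by auto
  have "f S0 y \<le> f S0 y0 \<and> f S0 y0 \<le> f S y0" if "S \<subseteq> {1..n}" "y \<in> Y" for S y
  proof -
    have "f S0 y \<le> minmax" using S0 bdd_above_f that(2) by (auto intro: cSUP_upper)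
    moreover have "f S0 y0 \<le> minmax" using S0 bdd_above_f y0(1) by (auto intro: cSUP_upper)
    moreover have "maxmin \<le> f S y0" "maxmin \<le> f S0 y0" using y0(2) S0(1) that(1) by (simp_all add: Min_le)
    ultimately show ?thesis using assms by linarith
  qed
  then have "saddle_point n f Y S0 y0"
    unfolding saddle_point_def using S0(1) y0(1) by blast
  then show ?thesis by blast
qed

end

theorem proposition1:
  fixes n :: nat and Y :: "(real ^ 'm) set" and f :: "nat set \<Rightarrow> real ^ 'm \<Rightarrow> real"
  assumes "Y \<noteq> {}" and "convex Y" and "compact Y"
    and "\<And>y. submodular_on n (\<lambda>S. f S y)"
    and "\<And>S. S \<subseteq> {1..n} \<Longrightarrow> concave_on UNIV (f S)"
    and "\<And>S. S \<subseteq> {1..n} \<Longrightarrow> continuous_on UNIV (f S)"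
  shows "(SUP y\<in>Y. MIN S\<in>Pow {1..n}. f S y) \<le> (MIN S\<in>Pow {1..n}. SUP y\<in>Y. f S y)
    \<and> ((INF x\<in>{1..n} \<rightarrow>\<^sub>E {0..1}. SUP y\<in>Y. lovasz2 n f x y)
           = (INF x\<in>{1..n} \<rightarrow>\<^sub>E {0,1}. SUP y\<in>Y. lovasz2 n f x y)
         \<longrightarrow> (SUP y\<in>Y. MIN S\<in>Pow {1..n}. f S y) = (MIN S\<in>Pow {1..n}. SUP y\<in>Y. f S y)
           \<and> (MIN S\<in>Pow {1..n}. SUP y\<in>Y. f S y) = (INF x\<in>{1..n} \<rightarrow>\<^sub>E {0..1}. SUP y\<in>Y. lovasz2 n f x y)
           \<and> (\<exists>S0 y0. saddle_point n f Y S0 y0))"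
proof -
  interpret submodular_concave_game n Y f
  proof
    fix S assume "S \<subseteq> {1..n}"
    then show "concave_on Y (f S)"
      using assms(2,5) unfolding concave_on_def by (blast intro: convex_on_subset)
    show "continuous_on Y (f S)"
      using assms(6) \<open>S \<subseteq> {1..n}\<close> by (blast intro: continuous_on_subset)
  qed (use assms in auto)
  show ?thesis
    using maxmin_le_minmax lovasz_minmax_eq_maxmin INF_lovasz2_vertices[of n f Y]
      saddle_point_if_maxmin_eq_minmax by simp
qed

end
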